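(* Let $\Pi$ be a homogeneous Poisson point process in $\mathbb{R}^2$ of unit intensity. Let $A=(-1/2,0)$, $B=(1/2,0)$, and let $C$ be the point of $\Pi$ nearest to $(0,0)$. Let $\alpha$ be the interior angle of triangle $ABC$ at $B=(1/2,0)$ and $\beta$ the interior angle at $A=(-1/2,0)$. Then the joint density of $(\alpha,\beta)$ is \[ 2\exp\!\left[-\frac{\pi}{4}\frac{\sin(x-y)^2+4\sin(x)^2\sin(y)^2}{\sin(x+y)^2}\right]\frac{\sin(x)\sin(y)}{\sin(x+y)^3}\quad\text{for } x>0,\ y>0,\ x+y<\pi, \] and $0$ otherwise.
   Context: The triangle $ABC$ so defined is called an anchored Poissonian triangle. For $C=(u,v)$ with $v>0$, $\tan\alpha=2v/(1-2u)$ and $\tan\beta=2v/(1+2u)$. *)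

theory Defs
  imports "HOL-Probability.Probability"
begin

definition count_in :: "('w \<Rightarrow> (real \<times> real) set) \<Rightarrow> (real \<times> real) set \<Rightarrow> 'w \<Rightarrow> nat" where
  "count_in PP B = (\<lambda>w. card (PP w \<inter> B))"

definition unit_poisson_pp :: "'w measure \<Rightarrow> ('w \<Rightarrow> (real \<times> real) set) \<Rightarrow> bool" where
  "unit_poisson_pp M PP \<longleftrightarrow>
     prob_space M \<and>
     (\<forall>w\<in>space M. \<forall>K. compact K \<longrightarrow> finite (PP w \<inter> K)) \<and>
     (\<forall>B \<in> sets borel. bounded B \<longrightarrow>
        count_in PP B \<in> measurable M (count_space UNIV) \<and>
        (\<forall>k::nat. measure M {w \<in> space M. count_in PP B w = k}
                  = measure lborel B ^ k / fact k * exp (- measure lborel B))) \<and>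
     (\<forall>(I::nat set) Bs. finite I \<longrightarrow> (\<forall>i\<in>I. Bs i \<in> sets borel \<and> bounded (Bs i)) \<longrightarrow>
        disjoint_family_on Bs I \<longrightarrow>
        prob_space.indep_vars M (\<lambda>_. count_space UNIV) (\<lambda>i. count_in PP (Bs i)) I)"

text \<open>The point of PP w nearest to the origin (well defined almost surely; arbitrary
  otherwise).\<close>

definition nearest_point :: "('w \<Rightarrow> (real \<times> real) set) \<Rightarrow> 'w \<Rightarrow> real \<times> real" where
  "nearest_point PP w = (THE c. c \<in> PP w \<and> (\<forall>d\<in>PP w. d \<noteq> c \<longrightarrow> norm c < norm d))"

definition vertex_angle :: "real \<times> real \<Rightarrow> real \<times> real \<Rightarrow> real \<times> real \<Rightarrow> real" where
  "vertex_angle P Q R = arccos (((Q - P) \<bullet> (R - P)) / (norm (Q - P) * norm (R - P)))"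

definition ptA :: "real \<times> real" where "ptA = (-1/2, 0)"
definition ptB :: "real \<times> real" where "ptB = (1/2, 0)"

definition anchored_density :: "real \<times> real \<Rightarrow> real" where
  "anchored_density z = (case z of (x, y) \<Rightarrow>
     if 0 < x \<and> 0 < y \<and> x + y < pi then
       2 * exp (- (pi / 4) * ((sin (x - y))\<^sup>2 + 4 * (sin x)\<^sup>2 * (sin y)\<^sup>2) / (sin (x + y))\<^sup>2)
         * sin x * sin y / (sin (x + y)) ^ 3
     else 0)"

end

theory Submission
  imports Defs
begin

text \<open>The probability that a unit Poisson process has no point in a disc of area \<open>a\<close> is \<open>exp (- a)\<close>,
  so the point \<open>C\<close> nearest to the origin has density \<open>exp (- pi * norm C ^ 2)\<close>.  To prove this,
  cut the plane into annuli of area \<open>pi / n\<close>: the event that \<open>C\<close> lies in the \<open>k\<close>-th annulus and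
  inside a Borel set \<open>S\<close>, and is the only point of the disc bounded by that annulus, has probability
  \<open>exp (- pi * (k + 1) / n)\<close> times the area of the part of \<open>S\<close> in the annulus.  Summing over \<open>k\<close>
  bounds the probability of \<open>C \<in> S\<close> from below by \<open>exp (- pi / n)\<close> times the Gaussian measure of
  \<open>S\<close>.  Letting \<open>n \<rightarrow> \<infinity>\<close> and applying the same bound to the complement of \<open>S\<close> shows that
  the two probability measures agree.

  The base angles \<open>(\<alpha>, \<beta>)\<close> do not change under reflection of \<open>C\<close> in the line \<open>AB\<close>.  On the
  upper half plane \<open>C\<close> is recovered from them by the law of sines, and the Jacobian of this
  inverse map is \<open>sin \<alpha> sin \<beta> / sin (\<alpha> + \<beta>) ^ 3\<close>.  The change of variables formula, applied
  to both half planes, turns the Gaussian density of \<open>C\<close> into the stated density.\<close>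

section \<open>The Gaussian density of the nearest point\<close>

definition nearest_point_density :: "real \<times> real \<Rightarrow> real" where
  "nearest_point_density c = exp (- pi * norm c ^ 2)"

lemma nearest_point_density_Pair: "nearest_point_density (x, y) = exp (- pi * (x^2 + y^2))"
  by (simp add: nearest_point_density_def norm_Pair)

lemma nearest_point_density_nonneg: "0 \<le> nearest_point_density c"
  by (simp add: nearest_point_density_def)

lemma borel_measurable_nearest_point_density [measurable]:
  "nearest_point_density \<in> borel_measurable borel"
  unfolding nearest_point_density_def by (intro borel_measurable_continuous_onI continuous_intros)

lemma nn_integral_exp_minus_pi_square: "(\<integral>\<^sup>+x. ennreal (exp (- pi * x^2)) \<partial>lborel) = 1"
proof -
  have "exp (- pi * x^2) = normal_density 0 (1 / sqrt (2*pi)) x" for x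
    by (simp add: normal_density_def power_divide power_mult_distrib)
  then have "(\<integral>\<^sup>+x. ennreal (exp (- pi * x^2)) \<partial>lborel)
      = ennreal (\<integral>x. normal_density 0 (1 / sqrt (2*pi)) x \<partial>lborel)"
    by (simp add: nn_integral_eq_integral)
  then show ?thesis by simp
qed

lemma nn_integral_nearest_point_density: "(\<integral>\<^sup>+c. ennreal (nearest_point_density c) \<partial>lborel) = 1"
proof -
  have "(\<integral>\<^sup>+c. ennreal (nearest_point_density c) \<partial>lborel)
      = (\<integral>\<^sup>+c. ennreal (nearest_point_density c) \<partial>(lborel \<Otimes>\<^sub>M lborel))"
    by (simp add: lborel_prod)
  also have "\<dots> = (\<integral>\<^sup>+x. \<integral>\<^sup>+y. ennreal (nearest_point_density (x, y)) \<partial>lborel \<partial>lborel)"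
    by (rule lborel.nn_integral_fst[symmetric]) (simp add: lborel_prod)
  also have "\<dots> = (\<integral>\<^sup>+x. ennreal (exp (- pi * x^2)) * \<integral>\<^sup>+y. ennreal (exp (- pi * y^2)) \<partial>lborel \<partial>lborel)"
  proof -
    have "nearest_point_density (x, y) = exp (- pi * x^2) * exp (- pi * y^2)" for x y
      by (simp add: nearest_point_density_Pair algebra_simps flip: exp_add)
    then show ?thesis
      by (simp add: ennreal_mult' nn_integral_cmult)
  qed
  also have "\<dots> = 1"
    using nn_integral_exp_minus_pi_square by simp
  finally show ?thesis .
qed

lemma prob_space_nearest_point_density: "prob_space (density lborel nearest_point_density)"
  by (rule prob_spaceI) (simp add: emeasure_density nn_integral_nearest_point_density)

lemma nn_integral_nearest_point_density_indicator_finite: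
  "(\<integral>\<^sup>+c. ennreal (nearest_point_density c) * indicator A c \<partial>lborel) < \<infinity>"
proof -
  have "(\<integral>\<^sup>+c. ennreal (nearest_point_density c) * indicator A c \<partial>lborel)
      \<le> (\<integral>\<^sup>+c. ennreal (nearest_point_density c) \<partial>lborel)"
    by (intro nn_integral_mono) (simp add: indicator_def)
  then show ?thesis
    by (simp add: nn_integral_nearest_point_density order.strict_trans1)
qed

section \<open>Nearest points of locally finite sets\<close>

definition is_nearest :: "(real \<times> real) set \<Rightarrow> real \<times> real \<Rightarrow> bool" where
  "is_nearest P c \<longleftrightarrow> c \<in> P \<and> (\<forall>d\<in>P. d \<noteq> c \<longrightarrow> norm c < norm d)"

lemma nearest_point_eq_The: "nearest_point PP w = The (is_nearest (PP w))"
  unfolding nearest_point_def is_nearest_def by simp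

lemma the_is_nearest: "is_nearest P c \<Longrightarrow> The (is_nearest P) = c"
  unfolding is_nearest_def by (rule the_equality) (use less_asym in blast)+

definition locally_finite :: "(real \<times> real) set \<Rightarrow> bool" where
  "locally_finite P \<longleftrightarrow> (\<forall>K. compact K \<longrightarrow> finite (P \<inter> K))"

lemma locally_finite_Int_bounded: "locally_finite P \<Longrightarrow> bounded B \<Longrightarrow> finite (P \<inter> B)"
  unfolding locally_finite_def
  by (meson closure_subset compact_closure finite_subset inf_mono order_refl)

text \<open>Discs of area \<open>pi k / n\<close> around the origin and the annuli between consecutive ones.
  For \<open>n = 0\<close> all of them are empty, because \<open>k / 0 = 0\<close>.\<close>

definition disc :: "nat \<Rightarrow> nat \<Rightarrow> (real \<times> real) set" where
  "disc n k = ball 0 (sqrt (real k / real n))"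

definition annulus :: "nat \<Rightarrow> nat \<Rightarrow> (real \<times> real) set" where
  "annulus n k = disc n (Suc k) - disc n k"

lemma mem_disc: "c \<in> disc n k \<longleftrightarrow> norm c ^ 2 < real k / real n"
  unfolding disc_def mem_ball dist_0_norm
  by (metis abs_of_nonneg norm_ge_zero real_sqrt_abs real_sqrt_less_iff)

lemma mem_annulus:
  "c \<in> annulus n k \<longleftrightarrow> real k / real n \<le> norm c ^ 2 \<and> norm c ^ 2 < real (Suc k) / real n"
  by (auto simp: annulus_def mem_disc not_less)

lemma disc_mono: "k \<le> l \<Longrightarrow> disc n k \<subseteq> disc n l"
  unfolding disc_def by (intro subset_ball real_sqrt_le_mono divide_right_mono) auto

lemma disc_Suc: "disc n (Suc k) = disc n k \<union> annulus n k"
  unfolding annulus_def using disc_mono[of k "Suc k" n] by auto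

lemma disc_borel [measurable]: "disc n k \<in> sets borel"
  and annulus_borel [measurable]: "annulus n k \<in> sets borel"
  unfolding annulus_def disc_def by simp_all

lemma bounded_disc: "bounded (disc n k)"
  and bounded_annulus: "bounded (annulus n k)"
  unfolding annulus_def disc_def by (simp_all add: bounded_diff)

lemma measure_disc: "measure lborel (disc n k) = pi * real k / real n"
  unfolding disc_def by (simp add: content_ball unit_ball_vol_2)

lemma mem_annulus_floor:
  assumes "n > 0"
  shows "c \<in> annulus n (nat \<lfloor>real n * norm c ^ 2\<rfloor>)"
proof -
  have "real (nat \<lfloor>real n * norm c ^ 2\<rfloor>) = \<lfloor>real n * norm c ^ 2\<rfloor>"
    by simp
  then have "real (nat \<lfloor>real n * norm c ^ 2\<rfloor>) \<le> real n * norm c ^ 2"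
    "real n * norm c ^ 2 < real (Suc (nat \<lfloor>real n * norm c ^ 2\<rfloor>))"
    by linarith+
  with assms show ?thesis
    unfolding mem_annulus by (simp add: divide_le_eq less_divide_eq mult.commute)
qed

lemma disjoint_family_annulus: "disjoint_family (annulus n)"
proof -
  have "annulus n k \<inter> annulus n l = {}" if "k < l" for k l
    using disc_mono[of "Suc k" l n] that unfolding annulus_def by auto
  then show ?thesis
    unfolding disjoint_family_on_def by (metis Int_commute linorder_neqE_nat)
qed

lemma UN_annulus: "n > 0 \<Longrightarrow> (\<Union>k. annulus n k) = UNIV"
  using mem_annulus_floor by blast

lemma nearest_point_density_le_on_annulus:
  assumes "c \<in> annulus n k"
  shows "nearest_point_density c \<le> exp (- pi * real k / real n)"
proof -
  have "pi * (real k / real n) \<le> pi * norm c ^ 2"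
    using assms unfolding mem_annulus by (intro mult_left_mono) auto
  then show ?thesis
    unfolding nearest_point_density_def by simp
qed

lemma emeasure_density_annulus_le:
  assumes [measurable]: "S \<in> sets borel"
  shows "emeasure (density lborel nearest_point_density) (annulus n k \<inter> S)
    \<le> ennreal (exp (- pi * real k / real n) * measure lborel (annulus n k \<inter> S))"
proof -
  have "emeasure lborel (annulus n k \<inter> S) < \<infinity>"
    by (intro emeasure_bounded_finite bounded_subset[OF bounded_annulus]) auto
  then have emeasure_eq: "emeasure lborel (annulus n k \<inter> S) = ennreal (measure lborel (annulus n k \<inter> S))"
    by (simp add: emeasure_eq_ennreal_measure)
  have "emeasure (density lborel nearest_point_density) (annulus n k \<inter> S)
      = (\<integral>\<^sup>+x. ennreal (nearest_point_density x) * indicator (annulus n k \<inter> S) x \<partial>lborel)"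
    by (rule emeasure_density) auto
  also have "\<dots> \<le> (\<integral>\<^sup>+x. ennreal (exp (- pi * real k / real n)) * indicator (annulus n k \<inter> S) x \<partial>lborel)"
    using nearest_point_density_le_on_annulus
    by (intro nn_integral_mono) (auto simp: indicator_def intro: ennreal_leI)
  also have "\<dots> = ennreal (exp (- pi * real k / real n)) * emeasure lborel (annulus n k \<inter> S)"
    by (rule nn_integral_cmult_indicator) simp
  finally show ?thesis
    by (simp add: emeasure_eq ennreal_mult')
qed

lemma is_nearest_if_unique_in_disc:
  assumes "P \<inter> disc n (Suc k) = {c}" "c \<in> annulus n k"
  shows "is_nearest P c"
  unfolding is_nearest_def
proof (intro conjI ballI impI)
  fix d assume "d \<in> P" "d \<noteq> c"
  then have "d \<notin> disc n (Suc k)"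
    using assms(1) by blast
  then have "real (Suc k) / real n \<le> norm d ^ 2"
    by (simp only: mem_disc not_less)
  moreover have "norm c ^ 2 < real (Suc k) / real n"
    using assms(2) by (simp add: mem_annulus)
  ultimately have "norm c ^ 2 < norm d ^ 2"
    by linarith
  then show "norm c < norm d"
    by (simp add: power_less_imp_less_base)
qed (use assms in auto)

text \<open>Conversely a nearest point is alone in some disc \<open>disc n (Suc k)\<close>: choose \<open>1 / n\<close> smaller
  than the gap between \<open>norm c ^ 2\<close> and the squared norms of the finitely many other points
  of \<open>P\<close> in a neighbourhood.\<close>

lemma unique_in_disc_if_is_nearest:
  assumes "locally_finite P" "is_nearest P c"
  shows "\<exists>n k. P \<inter> disc n (Suc k) = {c} \<and> c \<in> annulus n k"
proof -
  define K where "K = P \<inter> cball 0 (norm c + 1) - {c}"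
  have "finite K"
    unfolding K_def using locally_finite_Int_bounded[OF assms(1)] by blast
  define \<delta> where "\<delta> = Min (insert 1 ((\<lambda>d. norm d ^ 2 - norm c ^ 2) ` K))"
  have gap: "norm c ^ 2 < norm d ^ 2" if "d \<in> K" for d
    using assms(2) that unfolding K_def is_nearest_def by (simp add: power_strict_mono)
  have "\<delta> > 0"
    unfolding \<delta>_def using \<open>finite K\<close> gap by (simp add: Min_gr_iff)
  have "\<delta> \<le> 1" and \<delta>_le: "\<And>d. d \<in> K \<Longrightarrow> \<delta> \<le> norm d ^ 2 - norm c ^ 2"
    unfolding \<delta>_def using \<open>finite K\<close> by simp_all
  obtain n :: nat where n: "1 / \<delta> < real n"
    using reals_Archimedean2 by blast
  with \<open>\<delta> > 0\<close> have "1 < \<delta> * real n"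
    by (simp add: divide_less_eq mult.commute)
  then have "n > 0"
    by (auto intro: gr0I)
  with \<open>1 < \<delta> * real n\<close> have "1 / real n < \<delta>"
    by (simp add: divide_less_eq mult.commute)
  define k where "k = nat \<lfloor>real n * norm c ^ 2\<rfloor>"
  have c_annulus: "c \<in> annulus n k"
    unfolding k_def using mem_annulus_floor[OF \<open>n > 0\<close>] .
  have "d = c" if "d \<in> P" "d \<in> disc n (Suc k)" for d
  proof (rule ccontr)
    assume "d \<noteq> c"
    have "real (Suc k) / real n = real k / real n + 1 / real n"
      by (simp add: add_divide_distrib)
    then have "norm d ^ 2 < norm c ^ 2 + \<delta>"
      using that(2) c_annulus \<open>1 / real n < \<delta>\<close> by (simp add: mem_disc mem_annulus)
    moreover have "norm c ^ 2 + 1 \<le> (norm c + 1) ^ 2"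
      by (simp add: power2_sum)
    ultimately have "norm d ^ 2 < (norm c + 1) ^ 2"
      using \<open>\<delta> \<le> 1\<close> by linarith
    then have "norm d < norm c + 1"
      by (rule power_less_imp_less_base) simp
    then have "d \<in> K"
      using that(1) \<open>d \<noteq> c\<close> unfolding K_def by simp
    then show False
      using \<delta>_le \<open>norm d ^ 2 < norm c ^ 2 + \<delta>\<close> by fastforce
  qed
  moreover have "c \<in> P"
    using assms(2) by (simp add: is_nearest_def)
  ultimately show ?thesis
    using c_annulus disc_Suc by blast
qed

lemma empty_and_singleton_iff_Un_singleton:
  assumes "A \<inter> X = {}" "D \<subseteq> X"
  shows "A = {} \<and> (\<exists>c. D = {c}) \<longleftrightarrow> (\<exists>c\<in>X. A \<union> D = {c})"
proof
  assume "A = {} \<and> (\<exists>c. D = {c})"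
  then obtain c where "A = {}" "D = {c}"
    by blast
  with assms(2) show "\<exists>c\<in>X. A \<union> D = {c}"
    by simp
next
  assume "\<exists>c\<in>X. A \<union> D = {c}"
  then obtain c where "c \<in> X" "A \<union> D = {c}"
    by blast
  then have "A \<subseteq> {c}" "c \<notin> A"
    using assms(1) by (metis Un_upper1, blast)
  then have "A = {}"
    by (metis insertI1 subset_singleton_iff)
  with \<open>A \<union> D = {c}\<close> show "A = {} \<and> (\<exists>c. D = {c})"
    by simp
qed

section \<open>Nearest point of a unit Poisson process\<close>

locale unit_poisson_process =
  fixes M :: "'w measure" and PP :: "'w \<Rightarrow> (real \<times> real) set"
  assumes unit_poisson_pp: "unit_poisson_pp M PP"

sublocale unit_poisson_process \<subseteq> prob_space M
  using unit_poisson_pp unfolding unit_poisson_pp_def by blast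

context unit_poisson_process
begin

lemma locally_finite_points: "w \<in> space M \<Longrightarrow> locally_finite (PP w)"
  using unit_poisson_pp unfolding unit_poisson_pp_def locally_finite_def by blast

lemma count_in_eq_sets:
  assumes "B \<in> sets borel" "bounded B"
  shows "{w \<in> space M. count_in PP B w = j} \<in> events"
proof -
  have "count_in PP B \<in> measurable M (count_space UNIV)"
    using unit_poisson_pp assms unfolding unit_poisson_pp_def by blast
  then have "count_in PP B -` {j} \<inter> space M \<in> events"
    by (rule measurable_sets) simp
  moreover have "count_in PP B -` {j} \<inter> space M = {w \<in> space M. count_in PP B w = j}"
    by blast
  ultimately show ?thesis
    by simp
qed

lemma prob_count_in_eq:
  "B \<in> sets borel \<Longrightarrow> bounded B \<Longrightarrow>
   prob {w \<in> space M. count_in PP B w = j} = measure lborel B ^ j / fact j * exp (- measure lborel B)"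
  using unit_poisson_pp unfolding unit_poisson_pp_def by blast

lemma indep_vars_count_in:
  "finite (I :: nat set) \<Longrightarrow> \<forall>i\<in>I. Bs i \<in> sets borel \<and> bounded (Bs i) \<Longrightarrow> disjoint_family_on Bs I \<Longrightarrow>
   indep_vars (\<lambda>_. count_space UNIV) (\<lambda>i. count_in PP (Bs i)) I"
  using unit_poisson_pp unfolding unit_poisson_pp_def by blast

lemma prob_count_in_disjoint:
  assumes "A \<in> sets borel" "bounded A" "D \<in> sets borel" "bounded D" "A \<inter> D = {}"
  shows "prob {w \<in> space M. count_in PP A w = i \<and> count_in PP D w = j} =
         prob {w \<in> space M. count_in PP A w = i} * prob {w \<in> space M. count_in PP D w = j}"
proof -
  define Bs where "Bs l = (if l = 0 then A else D)" for l :: nat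
  define V where "V l = (if l = 0 then {i} else {j})" for l :: nat
  have "indep_vars (\<lambda>_. count_space UNIV) (\<lambda>l. count_in PP (Bs l)) {0, 1}"
    using assms by (intro indep_vars_count_in) (auto simp: Bs_def disjoint_family_on_def)
  then have "prob (\<Inter>l\<in>{0, 1}. count_in PP (Bs l) -` V l \<inter> space M) =
      (\<Prod>l\<in>{0, 1}. prob (count_in PP (Bs l) -` V l \<inter> space M))"
    by (rule indep_varsD_finite) auto
  moreover have "(\<Inter>l\<in>{0, 1}. count_in PP (Bs l) -` V l \<inter> space M) =
      {w \<in> space M. count_in PP A w = i \<and> count_in PP D w = j}"
    by (auto simp: Bs_def V_def)
  moreover have "count_in PP (Bs 0) -` V 0 \<inter> space M = {w \<in> space M. count_in PP A w = i}"
    "count_in PP (Bs 1) -` V 1 \<inter> space M = {w \<in> space M. count_in PP D w = j}"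
    by (auto simp: Bs_def V_def)
  ultimately show ?thesis
    by simp
qed

definition annulus_event :: "nat \<Rightarrow> nat \<Rightarrow> (real \<times> real) set \<Rightarrow> 'w set" where
  "annulus_event n k S = {w \<in> space M. count_in PP (disc n k \<union> (annulus n k - S)) w = 0 \<and>
                                       count_in PP (annulus n k \<inter> S) w = 1}"

lemma annulus_event_sets:
  assumes [measurable]: "S \<in> sets borel"
  shows "annulus_event n k S \<in> events"
proof -
  have "annulus_event n k S = {w \<in> space M. count_in PP (disc n k \<union> (annulus n k - S)) w = 0} \<inter>
      {w \<in> space M. count_in PP (annulus n k \<inter> S) w = 1}"
    unfolding annulus_event_def by auto
  moreover have "bounded (disc n k \<union> (annulus n k - S))" "bounded (annulus n k \<inter> S)"
    using bounded_disc bounded_annulus by (auto intro: bounded_subset)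
  ultimately show ?thesis
    by (simp add: count_in_eq_sets sets.Int)
qed

lemma prob_annulus_event:
  assumes [measurable]: "S \<in> sets borel"
  shows "prob (annulus_event n k S) = exp (- pi * real (Suc k) / real n) * measure lborel (annulus n k \<inter> S)"
proof -
  define A where "A = disc n k \<union> (annulus n k - S)"
  define D where "D = annulus n k \<inter> S"
  have [measurable]: "A \<in> sets borel" "D \<in> sets borel"
    unfolding A_def D_def by auto
  have "bounded A" "bounded D"
    unfolding A_def D_def using bounded_disc bounded_annulus by (auto intro: bounded_subset)
  have "A \<inter> D = {}"
    unfolding A_def D_def annulus_def by auto
  have "measure lborel A + measure lborel D = measure lborel (A \<union> D)"
    using emeasure_bounded_finite[OF \<open>bounded A\<close>] emeasure_bounded_finite[OF \<open>bounded D\<close>] \<open>A \<inter> D = {}\<close>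
    by (intro measure_Union[symmetric]) auto
  also have "A \<union> D = disc n (Suc k)"
    unfolding A_def D_def disc_Suc by auto
  finally have measure_A_D: "measure lborel A + measure lborel D = pi * real (Suc k) / real n"
    by (simp add: measure_disc)
  have "prob (annulus_event n k S) = prob {w \<in> space M. count_in PP A w = 0 \<and> count_in PP D w = 1}"
    unfolding annulus_event_def A_def D_def ..
  also have "\<dots> = exp (- measure lborel A) * (measure lborel D * exp (- measure lborel D))"
    using \<open>bounded A\<close> \<open>bounded D\<close> \<open>A \<inter> D = {}\<close>
    by (simp add: prob_count_in_disjoint prob_count_in_eq)
  also have "\<dots> = exp (- (measure lborel A + measure lborel D)) * measure lborel D"
    by (simp add: exp_diff exp_minus field_simps)
  also have "\<dots> = exp (- pi * real (Suc k) / real n) * measure lborel D"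
    unfolding measure_A_D by simp
  finally show ?thesis
    unfolding D_def .
qed

lemma mem_annulus_event_iff:
  assumes "w \<in> space M"
  shows "w \<in> annulus_event n k S \<longleftrightarrow> (\<exists>c \<in> annulus n k \<inter> S. PP w \<inter> disc n (Suc k) = {c})"
proof -
  define A where "A = PP w \<inter> (disc n k \<union> (annulus n k - S))"
  define D where "D = PP w \<inter> (annulus n k \<inter> S)"
  have "bounded (disc n k \<union> (annulus n k - S))"
    by (simp add: bounded_disc bounded_annulus bounded_diff)
  then have "finite A"
    unfolding A_def by (rule locally_finite_Int_bounded[OF locally_finite_points[OF assms]])
  then have "w \<in> annulus_event n k S \<longleftrightarrow> A = {} \<and> (\<exists>c. D = {c})"
    using assms by (simp add: annulus_event_def count_in_def card_1_singleton_iff A_def D_def)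
  also have "\<dots> \<longleftrightarrow> (\<exists>c \<in> annulus n k \<inter> S. A \<union> D = {c})"
    by (rule empty_and_singleton_iff_Un_singleton) (auto simp: A_def D_def annulus_def)
  also have "A \<union> D = PP w \<inter> disc n (Suc k)"
    unfolding A_def D_def disc_Suc by blast
  finally show ?thesis .
qed

lemma annulus_event_subset_space: "annulus_event n k S \<subseteq> space M"
  unfolding annulus_event_def by blast

lemma is_nearest_if_annulus_event:
  assumes "w \<in> annulus_event n k S"
  shows "is_nearest (PP w) (nearest_point PP w) \<and> nearest_point PP w \<in> annulus n k \<inter> S"
proof -
  obtain c where c: "c \<in> annulus n k \<inter> S" "PP w \<inter> disc n (Suc k) = {c}"
    using assms annulus_event_subset_space mem_annulus_event_iff by blast
  then have "is_nearest (PP w) c"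
    by (intro is_nearest_if_unique_in_disc) auto
  with c show ?thesis
    by (simp add: nearest_point_eq_The the_is_nearest)
qed

lemma ex_annulus_event_iff:
  assumes "w \<in> space M"
  shows "(\<exists>n k. w \<in> annulus_event n k S) \<longleftrightarrow> Ex (is_nearest (PP w)) \<and> nearest_point PP w \<in> S"
proof
  show "Ex (is_nearest (PP w)) \<and> nearest_point PP w \<in> S" if "\<exists>n k. w \<in> annulus_event n k S"
    using that is_nearest_if_annulus_event by blast
next
  assume "Ex (is_nearest (PP w)) \<and> nearest_point PP w \<in> S"
  then obtain c where c: "is_nearest (PP w) c" "c \<in> S"
    by (metis nearest_point_eq_The the_is_nearest)
  then obtain n k where "PP w \<inter> disc n (Suc k) = {c}" "c \<in> annulus n k"
    using unique_in_disc_if_is_nearest locally_finite_points[OF assms] by blast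
  with assms c(2) show "\<exists>n k. w \<in> annulus_event n k S"
    using mem_annulus_event_iff by blast
qed

text \<open>Without a nearest point, \<^const>\<open>nearest_point\<close> returns the junk value \<open>The (\<lambda>_. False)\<close>.\<close>

lemma nearest_point_vimage:
  "{w \<in> space M. nearest_point PP w \<in> S} =
     (\<Union>n k. annulus_event n k S) \<union>
     (if The (\<lambda>_. False) \<in> S then space M - (\<Union>n k. annulus_event n k UNIV) else {})"
proof (intro set_eqI)
  fix w
  show "w \<in> {w \<in> space M. nearest_point PP w \<in> S} \<longleftrightarrow> w \<in> (\<Union>n k. annulus_event n k S) \<union>
     (if The (\<lambda>_. False) \<in> S then space M - (\<Union>n k. annulus_event n k UNIV) else {})"
  proof (cases "w \<in> space M")
    case True
    note ex_iff = ex_annulus_event_iff[OF True]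
    show ?thesis
    proof (cases "Ex (is_nearest (PP w))")
      case True
      then show ?thesis
        using \<open>w \<in> space M\<close> ex_iff[of S] ex_iff[of UNIV] by auto
    next
      case False
      then have "nearest_point PP w = The (\<lambda>_. False)"
        unfolding nearest_point_eq_The by (metis (full_types))
      with False show ?thesis
        using \<open>w \<in> space M\<close> ex_iff[of S] ex_iff[of UNIV] by auto
    qed
  qed (use annulus_event_subset_space in auto)
qed

lemma nearest_point_vimage_sets:
  assumes "S \<in> sets borel"
  shows "{w \<in> space M. nearest_point PP w \<in> S} \<in> events"
  unfolding nearest_point_vimage using annulus_event_sets assms by auto

lemma measurable_nearest_point: "nearest_point PP \<in> measurable M lborel"
proof -
  have "nearest_point PP -` S \<inter> space M \<in> events" if "open S" for S
    using nearest_point_vimage_sets[of S] that by (simp add: vimage_def Int_def conj_commute)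
  then show ?thesis
    by (simp add: borel_measurableI)
qed

lemma emeasure_density_annulus_le_annulus_event:
  assumes [measurable]: "S \<in> sets borel"
  shows "ennreal (exp (- pi / real n)) * emeasure (density lborel nearest_point_density) (annulus n k \<inter> S)
    \<le> emeasure M (annulus_event n k S)"
proof -
  have "- pi / real n + - pi * real k / real n = - pi * real (Suc k) / real n"
    by (simp add: add_divide_distrib[symmetric] algebra_simps)
  then have prob_eq: "exp (- pi / real n) * (exp (- pi * real k / real n) * measure lborel (annulus n k \<inter> S))
      = prob (annulus_event n k S)"
    by (simp add: prob_annulus_event mult.assoc flip: exp_add)
  have "ennreal (exp (- pi / real n)) * emeasure (density lborel nearest_point_density) (annulus n k \<inter> S)
      \<le> ennreal (exp (- pi / real n) * (exp (- pi * real k / real n) * measure lborel (annulus n k \<inter> S)))"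
    using emeasure_density_annulus_le[OF assms, of n k] by (simp add: ennreal_mult' mult_left_mono)
  then show ?thesis
    unfolding prob_eq by (simp add: emeasure_eq_measure)
qed

lemma emeasure_density_le_nearest_point_vimage_approx:
  assumes [measurable]: "S \<in> sets borel" and "n > 0"
  shows "ennreal (exp (- pi / real n)) * emeasure (density lborel nearest_point_density) S
    \<le> emeasure M {w \<in> space M. nearest_point PP w \<in> S}"
proof -
  let ?D = "density lborel nearest_point_density"
  have "emeasure ?D S = emeasure ?D (\<Union>k. annulus n k \<inter> S)"
    using UN_annulus[OF \<open>n > 0\<close>] by auto
  also have "\<dots> = (\<Sum>k. emeasure ?D (annulus n k \<inter> S))"
    using disjoint_family_annulus
    by (intro suminf_emeasure[symmetric]) (auto simp: disjoint_family_on_def)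
  finally have "ennreal (exp (- pi / real n)) * emeasure ?D S
      = (\<Sum>k. ennreal (exp (- pi / real n)) * emeasure ?D (annulus n k \<inter> S))"
    by simp
  also have "\<dots> \<le> (\<Sum>k. emeasure M (annulus_event n k S))"
    by (intro suminf_le emeasure_density_annulus_le_annulus_event) auto
  also have "\<dots> = emeasure M (\<Union>k. annulus_event n k S)"
  proof (rule suminf_emeasure)
    show "disjoint_family (\<lambda>k. annulus_event n k S)"
      using disjoint_family_annulus is_nearest_if_annulus_event
      unfolding disjoint_family_on_def by blast
  qed (auto intro: annulus_event_sets)
  also have "\<dots> \<le> emeasure M {w \<in> space M. nearest_point PP w \<in> S}"
    using annulus_event_subset_space is_nearest_if_annulus_event
    by (intro emeasure_mono nearest_point_vimage_sets) auto
  finally show ?thesis .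
qed

lemma measure_density_le_nearest_point_vimage:
  assumes [measurable]: "S \<in> sets borel"
  shows "measure (density lborel nearest_point_density) S \<le> prob {w \<in> space M. nearest_point PP w \<in> S}"
proof (rule LIMSEQ_le_const2)
  let ?a = "measure (density lborel nearest_point_density) S"
  have "(\<lambda>n. - pi / real n) \<longlonglongrightarrow> 0"
    by (rule lim_const_over_n)
  then have "(\<lambda>n. exp (- pi / real n)) \<longlonglongrightarrow> exp 0"
    by (rule tendsto_exp)
  then show "(\<lambda>n. exp (- pi / real n) * ?a) \<longlonglongrightarrow> ?a"
    using tendsto_mult_right by fastforce
  interpret D: prob_space "density lborel nearest_point_density"
    by (rule prob_space_nearest_point_density)
  show "\<exists>N. \<forall>n\<ge>N. exp (- pi / real n) * ?a \<le> prob {w \<in> space M. nearest_point PP w \<in> S}"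
  proof (intro exI allI impI)
    fix n :: nat assume "1 \<le> n"
    then have "ennreal (exp (- pi / real n) * ?a) \<le> ennreal (prob {w \<in> space M. nearest_point PP w \<in> S})"
      using emeasure_density_le_nearest_point_vimage_approx[of S n] nearest_point_vimage_sets[of S]
      by (simp add: D.emeasure_eq_measure emeasure_eq_measure ennreal_mult')
    then show "exp (- pi / real n) * ?a \<le> prob {w \<in> space M. nearest_point PP w \<in> S}"
      by (subst (asm) ennreal_le_iff) auto
  qed
qed

theorem distr_nearest_point: "distr M lborel (nearest_point PP) = density lborel nearest_point_density"
proof (rule measure_eqI)
  interpret D: prob_space "density lborel nearest_point_density"
    by (rule prob_space_nearest_point_density)
  fix A assume "A \<in> sets (distr M lborel (nearest_point PP))"
  then have [measurable]: "A \<in> sets borel"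
    by simp
  have "{w \<in> space M. nearest_point PP w \<in> - A} = space M - {w \<in> space M. nearest_point PP w \<in> A}"
    by auto
  then have "prob {w \<in> space M. nearest_point PP w \<in> A} + prob {w \<in> space M. nearest_point PP w \<in> - A} = 1"
    using prob_compl[OF nearest_point_vimage_sets[of A]] by simp
  moreover have "D.prob A + D.prob (- A) = 1"
    using D.prob_compl[of A] by (simp add: Compl_eq_Diff_UNIV)
  ultimately have "D.prob A = prob {w \<in> space M. nearest_point PP w \<in> A}"
    using measure_density_le_nearest_point_vimage[of A] measure_density_le_nearest_point_vimage[of "- A"]
    by simp
  then show "emeasure (distr M lborel (nearest_point PP)) A = emeasure (density lborel nearest_point_density) A"
    using measurable_nearest_point
    by (simp add: emeasure_distr D.emeasure_eq_measure emeasure_eq_measure vimage_def Int_def conj_commute)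
qed simp

end

section \<open>Change of variables in the plane\<close>

lemma nn_integral_change_of_variables:
  fixes g :: "real^'n::{finite,wellorder} \<Rightarrow> real^'n::_" and F :: "real^'n::_ \<Rightarrow> real"
  assumes S: "S \<in> sets lebesgue" and [measurable]: "g ` S \<in> sets borel"
    and der: "\<And>x. x \<in> S \<Longrightarrow> (g has_derivative g' x) (at x within S)" and inj: "inj_on g S"
    and [measurable]: "F \<in> borel_measurable borel" and F_nonneg: "\<And>x. 0 \<le> F x"
    and finite: "(\<integral>\<^sup>+x. ennreal (F x) * indicator (g ` S) x \<partial>lborel) < \<infinity>"
  shows "(\<integral>\<^sup>+x. ennreal (F x) * indicator (g ` S) x \<partial>lborel)
       = (\<integral>\<^sup>+x. ennreal (\<bar>det (matrix (g' x))\<bar> * F (g x)) * indicator S x \<partial>lborel)"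
proof -
  obtain r where r: "(\<integral>\<^sup>+x. ennreal (F x) * indicator (g ` S) x \<partial>lborel) = ennreal r" "0 \<le> r"
    using finite by (cases "\<integral>\<^sup>+x. ennreal (F x) * indicator (g ` S) x \<partial>lborel" rule: ennreal_cases) auto
  have "(\<integral>\<^sup>+x. ennreal (indicator (g ` S) x * F x) \<partial>lborel) = ennreal r"
    unfolding r(1)[symmetric] by (intro nn_integral_cong) (simp add: indicator_def)
  then have "((\<lambda>y. indicator (g ` S) y * F y) has_integral r) UNIV"
    using r(2) F_nonneg by (intro nn_integral_has_integral) auto
  then have "(F has_integral r) (g ` S)"
    by (simp add: has_integral_restrict_UNIV indicator_times_eq_if)
  then have "(\<lambda>y. vec (F y) :: real^1) absolutely_integrable_on g ` S \<and>
      integral (g ` S) (\<lambda>y. vec (F y) :: real^1) = vec r"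
    using F_nonneg
    by (auto simp: absolutely_integrable_on_1_iff integral_on_1_eq integral_unique
             intro!: nonnegative_absolutely_integrable_1 has_integral_integrable)
  then have "(\<lambda>x. \<bar>det (matrix (g' x))\<bar> *\<^sub>R (vec (F (g x)) :: real^1)) absolutely_integrable_on S \<and>
      integral S (\<lambda>x. \<bar>det (matrix (g' x))\<bar> *\<^sub>R (vec (F (g x)) :: real^1)) = vec r"
    by (subst has_absolute_integral_change_of_variables[OF S der inj]) auto
  then have "(\<lambda>x. \<bar>det (matrix (g' x))\<bar> * F (g x)) absolutely_integrable_on S"
    "integral S (\<lambda>x. \<bar>det (matrix (g' x))\<bar> * F (g x)) = r"
    by (simp_all add: absolutely_integrable_on_1_iff integral_on_1_eq vec_eq_iff)
  then have "((\<lambda>x. \<bar>det (matrix (g' x))\<bar> * F (g x)) has_integral r) S"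
    unfolding absolutely_integrable_on_def using has_integral_integral by blast
  then show ?thesis
    unfolding r(1) using F_nonneg by (intro nn_integral_has_integral_lebesgue'[symmetric]) auto
qed

text \<open>The change of variables theorem of the library is stated for \<open>real^'n\<close>; it is transported
  to \<open>real \<times> real\<close> along the measure preserving linear isomorphism \<open>pair_of_vec\<close>.\<close>

definition pair_of_vec :: "real^2 \<Rightarrow> real \<times> real" where
  "pair_of_vec y = (y $ 1, y $ 2)"

definition vec_of_pair :: "real \<times> real \<Rightarrow> real^2" where
  "vec_of_pair c = (\<chi> i. if i = 1 then fst c else snd c)"

lemma vec_of_pair_nth [simp]: "vec_of_pair c $ 1 = fst c" "vec_of_pair c $ 2 = snd c"
  by (simp_all add: vec_of_pair_def)

lemma pair_of_vec_of_pair [simp]: "pair_of_vec (vec_of_pair c) = c"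
  by (simp add: pair_of_vec_def vec_of_pair_def)

lemma vec_of_pair_of_vec [simp]: "vec_of_pair (pair_of_vec y) = y"
  by (simp add: pair_of_vec_def vec_of_pair_def vec_eq_iff forall_2)

lemma vimage_pair_of_vec: "pair_of_vec -` A = vec_of_pair ` A"
  by (auto simp: image_iff) (metis vec_of_pair_of_vec)

lemma surj_pair_of_vec: "surj pair_of_vec"
  by (metis pair_of_vec_of_pair surjI)

lemma bounded_linear_pair_of_vec: "bounded_linear pair_of_vec"
  by (simp add: linear_conv_bounded_linear[symmetric] linear_iff pair_of_vec_def)

lemma bounded_linear_vec_of_pair: "bounded_linear vec_of_pair"
  by (simp add: linear_conv_bounded_linear[symmetric] linear_iff vec_of_pair_def vec_eq_iff)

lemma borel_measurable_pair_of_vec [measurable]: "pair_of_vec \<in> borel_measurable borel"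
  by (intro borel_measurable_continuous_onI linear_continuous_on bounded_linear_pair_of_vec)

lemma emeasure_lborel_box_vec2:
  assumes "a $ 1 \<le> b $ 1" "a $ 2 \<le> b $ 2"
  shows "emeasure lborel (box a b :: (real^2) set) = ennreal ((b $ 1 - a $ 1) * (b $ 2 - a $ 2))"
proof -
  have "(\<Prod>i\<in>Basis. (b - a) \<bullet> i) = (\<Prod>i\<in>UNIV. (b - a) $ i)"
    by (simp add: Basis_vec_def cart_eq_inner_axis axis_eq_axis prod.UNION_disjoint)
  moreover have "\<forall>i\<in>Basis. a \<bullet> i \<le> b \<bullet> i"
    using assms by (auto simp: Basis_vec_def inner_axis forall_2)
  ultimately show ?thesis
    by (simp add: emeasure_lborel_box_eq UNIV_2)
qed

lemma lborel_distr_pair_of_vec: "distr lborel borel pair_of_vec = lborel"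
proof (rule lborel_eqI[symmetric])
  fix l u :: "real \<times> real"
  assume lu: "\<And>b. b \<in> Basis \<Longrightarrow> l \<bullet> b \<le> u \<bullet> b"
  have "fst l \<le> fst u" "snd l \<le> snd u"
    using lu[of "(1, 0)"] lu[of "(0, 1)"] by (auto simp: Basis_prod_def inner_prod_def)
  have "pair_of_vec -` box l u = box (vec_of_pair l) (vec_of_pair u)"
    by (auto simp: mem_box_cart pair_of_vec_def vec_of_pair_def forall_2 mem_box Basis_prod_def inner_prod_def)
  then have "emeasure (distr lborel borel pair_of_vec) (box l u)
      = emeasure lborel (box (vec_of_pair l) (vec_of_pair u))"
    by (subst emeasure_distr) auto
  also have "\<dots> = (\<Prod>b\<in>Basis. (u - l) \<bullet> b)"
    using \<open>fst l \<le> fst u\<close> \<open>snd l \<le> snd u\<close>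
    by (simp add: emeasure_lborel_box_vec2 vec_of_pair_def Basis_prod_def inner_prod_def mult.commute)
  finally show "emeasure (distr lborel borel pair_of_vec) (box l u) = (\<Prod>b\<in>Basis. (u - l) \<bullet> b)" .
qed simp

lemma nn_integral_pair_of_vec:
  "h \<in> borel_measurable borel \<Longrightarrow> (\<integral>\<^sup>+x. h x \<partial>lborel) = (\<integral>\<^sup>+y. h (pair_of_vec y) \<partial>lborel)"
  by (subst lborel_distr_pair_of_vec[symmetric]) (simp add: nn_integral_distr)

definition det2 :: "(real \<times> real \<Rightarrow> real \<times> real) \<Rightarrow> real" where
  "det2 L = fst (L (1, 0)) * snd (L (0, 1)) - fst (L (0, 1)) * snd (L (1, 0))"

lemma det_matrix_conj_pair_of_vec: "det (matrix (\<lambda>h. vec_of_pair (L (pair_of_vec h)))) = det2 L"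
  by (simp add: det_2 matrix_def det2_def pair_of_vec_def axis_def)

lemma has_derivative_conj_pair_of_vec:
  assumes "(g has_derivative g') (at (pair_of_vec y) within pair_of_vec ` T)"
  shows "((\<lambda>y. vec_of_pair (g (pair_of_vec y))) has_derivative (\<lambda>h. vec_of_pair (g' (pair_of_vec h))))
    (at y within T)"
proof -
  from bounded_linear.has_derivative[OF bounded_linear_pair_of_vec has_derivative_ident] assms
  have "((\<lambda>y. g (pair_of_vec y)) has_derivative (\<lambda>h. g' (pair_of_vec h))) (at y within T)"
    by (rule has_derivative_in_compose)
  then show ?thesis
    by (rule bounded_linear.has_derivative[OF bounded_linear_vec_of_pair])
qed

lemma inj_on_conj_pair_of_vec:
  "inj_on g S \<Longrightarrow> inj_on (\<lambda>y. vec_of_pair (g (pair_of_vec y))) (pair_of_vec -` S)"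
  unfolding inj_on_def by (metis pair_of_vec_of_pair vec_of_pair_of_vec vimageE)

lemma nn_integral_change_of_variables_pair:
  fixes g :: "real \<times> real \<Rightarrow> real \<times> real" and F :: "real \<times> real \<Rightarrow> real"
  assumes [measurable]: "S \<in> sets borel" "g ` S \<in> sets borel"
    and der: "\<And>x. x \<in> S \<Longrightarrow> (g has_derivative g' x) (at x within S)" and inj: "inj_on g S"
    and [measurable]: "F \<in> borel_measurable borel" and F_nonneg: "\<And>x. 0 \<le> F x"
    and finite: "(\<integral>\<^sup>+x. ennreal (F x) * indicator (g ` S) x \<partial>lborel) < \<infinity>"
    and RHS_measurable: "(\<lambda>x. ennreal (\<bar>det2 (g' x)\<bar> * F (g x)) * indicator S x) \<in> borel_measurable borel"
  shows "(\<integral>\<^sup>+x. ennreal (F x) * indicator (g ` S) x \<partial>lborel)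
       = (\<integral>\<^sup>+x. ennreal (\<bar>det2 (g' x)\<bar> * F (g x)) * indicator S x \<partial>lborel)"
proof -
  define G where "G y = vec_of_pair (g (pair_of_vec y))" for y
  define S' where "S' = pair_of_vec -` S"
  have [measurable]: "S' \<in> sets borel"
    using measurable_sets[OF borel_measurable_pair_of_vec, of S] unfolding S'_def by simp
  have G_image: "G ` S' = pair_of_vec -` (g ` S)"
    unfolding G_def S'_def vimage_pair_of_vec by (simp add: image_image)
  then have G_image_borel: "G ` S' \<in> sets borel"
    using measurable_sets[OF borel_measurable_pair_of_vec, of "g ` S"] by simp
  have "(G has_derivative (\<lambda>h. vec_of_pair (g' (pair_of_vec y) (pair_of_vec h)))) (at y within S')"
    if "y \<in> S'" for y
    using der[of "pair_of_vec y"] that unfolding G_def S'_def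
    by (intro has_derivative_conj_pair_of_vec) (simp add: surj_pair_of_vec)
  note change = nn_integral_change_of_variables[OF _ G_image_borel this inj_on_conj_pair_of_vec[OF inj,
        folded G_def S'_def], unfolded det_matrix_conj_pair_of_vec]
  have LHS: "(\<integral>\<^sup>+x. ennreal (F x) * indicator (g ` S) x \<partial>lborel)
      = (\<integral>\<^sup>+y. ennreal (F (pair_of_vec y)) * indicator (G ` S') y \<partial>lborel)"
    unfolding G_image by (subst nn_integral_pair_of_vec) (auto simp: indicator_def)
  have RHS: "(\<integral>\<^sup>+x. ennreal (\<bar>det2 (g' x)\<bar> * F (g x)) * indicator S x \<partial>lborel)
      = (\<integral>\<^sup>+y. ennreal (\<bar>det2 (g' (pair_of_vec y))\<bar> * F (pair_of_vec (G y))) * indicator S' y \<partial>lborel)"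
    unfolding nn_integral_pair_of_vec[OF RHS_measurable] by (simp add: G_def S'_def indicator_def)
  show ?thesis
    unfolding LHS RHS using finite F_nonneg unfolding LHS
    by (intro change) auto
qed

section \<open>Base angles and apex of a triangle on \<open>AB\<close>\<close>

definition base_angles :: "real \<times> real \<Rightarrow> real \<times> real" where
  "base_angles c = (vertex_angle ptB ptA c, vertex_angle ptA ptB c)"

definition triangle_angles :: "(real \<times> real) set" where
  "triangle_angles = {x. 0 < fst x \<and> 0 < snd x \<and> fst x + snd x < pi}"

text \<open>By the law of sines the side \<open>AC\<close> of a triangle with \<open>AB = 1\<close> and base angles
  \<open>(\<alpha>, \<beta>)\<close> has length \<open>sin \<alpha> / sin (\<alpha> + \<beta>)\<close>, which gives the apex \<open>C = A + AC (cos \<beta>, sin \<beta>)\<close>.\<close>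

definition apex :: "real \<times> real \<Rightarrow> real \<times> real" where
  "apex x = (sin (fst x - snd x) / (2 * sin (fst x + snd x)),
             sin (fst x) * sin (snd x) / sin (fst x + snd x))"

lemma sin_pos_if_triangle_angles:
  assumes "x \<in> triangle_angles"
  shows "sin (fst x) > 0" "sin (snd x) > 0" "sin (fst x + snd x) > 0"
  using assms unfolding triangle_angles_def by (auto intro: sin_gt_zero)

lemma vertex_angle_ptB: "vertex_angle ptB ptA (u, v) = arccos ((1/2 - u) / sqrt ((1/2 - u)^2 + v^2))"
  by (simp add: vertex_angle_def ptA_def ptB_def inner_Pair norm_Pair power2_commute)

lemma vertex_angle_ptA: "vertex_angle ptA ptB (u, v) = arccos ((u + 1/2) / sqrt ((u + 1/2)^2 + v^2))"
  by (simp add: vertex_angle_def ptA_def ptB_def inner_Pair norm_Pair)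

lemma base_angles_reflect: "base_angles (u, - v) = base_angles (u, v)"
  unfolding base_angles_def vertex_angle_ptA vertex_angle_ptB by simp

lemma arccos_polar:
  assumes "0 < r" "0 \<le> t" "t \<le> pi"
  shows "arccos ((r * cos t) / sqrt ((r * cos t)^2 + (r * sin t)^2)) = t"
proof -
  have "sqrt ((r * cos t)^2 + (r * sin t)^2) = r"
    using assms(1) by (simp add: power_mult_distrib flip: distrib_left)
  then show ?thesis
    using assms by (simp add: arccos_cos)
qed

lemma base_angles_apex:
  assumes "x \<in> triangle_angles"
  shows "snd (apex x) > 0 \<and> base_angles (apex x) = x"
proof -
  obtain a b where x: "x = (a, b)"
    by (cases x)
  with assms have "0 < a" "0 < b" "a + b < pi"
    by (simp_all add: triangle_angles_def)
  from sin_pos_if_triangle_angles[OF assms] x have "sin a > 0" "sin b > 0" "sin (a + b) > 0"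
    by simp_all
  define u where "u = sin (a - b) / (2 * sin (a + b))"
  define v where "v = sin a * sin b / sin (a + b)"
  have AC: "1/2 - u = (sin b / sin (a + b)) * cos a" "v = (sin b / sin (a + b)) * sin a"
    and BC: "u + 1/2 = (sin a / sin (a + b)) * cos b" "v = (sin a / sin (a + b)) * sin b"
    unfolding u_def v_def using \<open>sin (a + b) > 0\<close> by (simp_all add: field_simps sin_add sin_diff)
  have "vertex_angle ptB ptA (u, v) = a"
    unfolding vertex_angle_ptB AC using \<open>sin b > 0\<close> \<open>sin (a + b) > 0\<close> \<open>0 < a\<close> \<open>0 < b\<close> \<open>a + b < pi\<close>
    by (intro arccos_polar) simp_all
  moreover have "vertex_angle ptA ptB (u, v) = b"
    unfolding vertex_angle_ptA BC using \<open>sin a > 0\<close> \<open>sin (a + b) > 0\<close> \<open>0 < a\<close> \<open>0 < b\<close> \<open>a + b < pi\<close>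
    by (intro arccos_polar) simp_all
  moreover have "v > 0"
    unfolding v_def using \<open>sin a > 0\<close> \<open>sin b > 0\<close> \<open>sin (a + b) > 0\<close> by simp
  ultimately show ?thesis
    by (simp add: x apex_def base_angles_def u_def v_def)
qed

lemma arccos_div_hypot:
  fixes p v :: real
  assumes "v > 0"
  defines "h \<equiv> sqrt (p^2 + v^2)"
  shows "h > 0" "0 < arccos (p / h)" "arccos (p / h) < pi"
    "cos (arccos (p / h)) = p / h" "sin (arccos (p / h)) = v / h"
proof -
  show "h > 0"
    unfolding h_def using assms(1) by (simp add: add_nonneg_pos)
  have "\<bar>p\<bar> < h"
    unfolding h_def using assms(1) by (intro real_less_rsqrt) simp
  with \<open>h > 0\<close> have "-1 < p / h" "p / h < 1"
    by (auto simp: divide_less_eq less_divide_eq abs_less_iff)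
  then show "0 < arccos (p / h)" "arccos (p / h) < pi" "cos (arccos (p / h)) = p / h"
    using arccos_lt_bounded by auto
  have "1 - (p / h)^2 = (h^2 - p^2) / h^2"
    using \<open>h > 0\<close> by (simp add: field_simps)
  also have "\<dots> = (v / h)^2"
    unfolding h_def by (simp add: power_divide)
  finally have "1 - (p / h)^2 = (v / h)^2" .
  with \<open>h > 0\<close> \<open>-1 < p / h\<close> \<open>p / h < 1\<close> assms(1) show "sin (arccos (p / h)) = v / h"
    by (simp add: sin_arccos)
qed

lemma apex_base_angles:
  assumes "v > 0"
  shows "base_angles (u, v) \<in> triangle_angles \<and> apex (base_angles (u, v)) = (u, v)"
proof -
  define p q where "p = 1/2 - u" and "q = u + 1/2"
  define hp hq where "hp = sqrt (p^2 + v^2)" and "hq = sqrt (q^2 + v^2)"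
  define a b where "a = arccos (p / hp)" and "b = arccos (q / hq)"
  note a = arccos_div_hypot[OF assms, of p, folded hp_def a_def]
  note b = arccos_div_hypot[OF assms, of q, folded hq_def b_def]
  have "base_angles (u, v) = (a, b)"
    by (simp add: base_angles_def vertex_angle_ptA vertex_angle_ptB a_def b_def hp_def hq_def p_def q_def)
  have "sin (a + b) = (v / hp) * (q / hq) + (p / hp) * (v / hq)"
    using a b by (simp add: sin_add)
  also have "\<dots> = v * (p + q) / (hp * hq)"
    using a(1) b(1) by (simp add: field_simps)
  finally have sin_add_ab: "sin (a + b) = v / (hp * hq)"
    by (simp add: p_def q_def)
  have "sin (a - b) = (v / hp) * (q / hq) - (p / hp) * (v / hq)"
    using a b by (simp add: sin_diff)
  then have sin_diff_ab: "sin (a - b) = v * (q - p) / (hp * hq)"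
    using a(1) b(1) by (simp add: field_simps)
  have "sin (a + b) > 0"
    unfolding sin_add_ab using a(1) b(1) assms by simp
  have "a + b < pi"
  proof (rule ccontr)
    assume "\<not> a + b < pi"
    then have "sin (a + b) \<le> 0"
      using a b by (intro sin_le_zero) auto
    with \<open>sin (a + b) > 0\<close> show False
      by simp
  qed
  then have "(a, b) \<in> triangle_angles"
    using a b by (simp add: triangle_angles_def)
  moreover have "apex (a, b) = (u, v)"
    using a b assms
    by (simp add: apex_def sin_add_ab sin_diff_ab field_simps p_def q_def power2_eq_square)
  ultimately show ?thesis
    using \<open>base_angles (u, v) = (a, b)\<close> by simp
qed

lemma apex_image: "apex ` (T \<inter> triangle_angles) = base_angles -` T \<inter> {c. snd c > 0}"
proof
  show "apex ` (T \<inter> triangle_angles) \<subseteq> base_angles -` T \<inter> {c. snd c > 0}"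
    using base_angles_apex by auto
  show "base_angles -` T \<inter> {c. snd c > 0} \<subseteq> apex ` (T \<inter> triangle_angles)"
  proof
    fix c assume c: "c \<in> base_angles -` T \<inter> {c. snd c > 0}"
    then have "base_angles c \<in> triangle_angles" "apex (base_angles c) = c"
      using apex_base_angles[of "snd c" "fst c"] by auto
    with c show "c \<in> apex ` (T \<inter> triangle_angles)"
      by (metis IntI image_eqI vimageE IntD1)
  qed
qed

definition apex_deriv :: "real \<times> real \<Rightarrow> real \<times> real \<Rightarrow> real \<times> real" where
  "apex_deriv x h =
     ((sin (snd x) * cos (snd x) * fst h - sin (fst x) * cos (fst x) * snd h) / (sin (fst x + snd x))^2,
      ((sin (snd x))^2 * fst h + (sin (fst x))^2 * snd h) / (sin (fst x + snd x))^2)"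

lemma has_derivative_apex:
  assumes "sin (fst x + snd x) \<noteq> 0"
  shows "(apex has_derivative apex_deriv x) (at x within X)"
proof -
  obtain a b where x: "x = (a, b)"
    by (cases x)
  with assms have s: "sin (a + b) \<noteq> 0"
    by simp
  have sin_2b: "sin (a + b) * cos (a - b) - cos (a + b) * sin (a - b) = 2 * sin b * cos b"
    using sin_diff[of "a + b" "a - b"] by (simp add: sin_double)
  have sin_2a: "sin (a + b) * cos (a - b) + cos (a + b) * sin (a - b) = 2 * sin a * cos a"
    using sin_add[of "a + b" "a - b"] by (simp add: sin_double)
  have sin_b: "sin (a + b) * cos a - cos (a + b) * sin a = sin b"
    using sin_diff[of "a + b" a] by simp
  have sin_a: "sin (a + b) * cos b - cos (a + b) * sin b = sin a"
    using sin_diff[of "a + b" b] by simp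
  have "((\<lambda>x. sin (fst x - snd x) / (2 * sin (fst x + snd x))) has_derivative
      (\<lambda>h. (fst h * (sin (a + b) * cos (a - b) - cos (a + b) * sin (a - b))
           - snd h * (sin (a + b) * cos (a - b) + cos (a + b) * sin (a - b))) / (2 * (sin (a + b))^2)))
      (at (a, b) within X)"
    using s by (auto intro!: derivative_eq_intros ext simp: field_simps power2_eq_square)
  then have "((\<lambda>x. sin (fst x - snd x) / (2 * sin (fst x + snd x))) has_derivative
      (\<lambda>h. fst (apex_deriv (a, b) h))) (at (a, b) within X)"
    unfolding sin_2a sin_2b
    by (rule has_derivative_eq_rhs) (use s in \<open>auto simp: apex_deriv_def fun_eq_iff field_simps\<close>)
  moreover have "((\<lambda>x. sin (fst x) * sin (snd x) / sin (fst x + snd x)) has_derivative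
      (\<lambda>h. (fst h * sin b * (sin (a + b) * cos a - cos (a + b) * sin a)
           + snd h * sin a * (sin (a + b) * cos b - cos (a + b) * sin b)) / (sin (a + b))^2))
      (at (a, b) within X)"
    using s by (auto intro!: derivative_eq_intros ext simp: field_simps power2_eq_square)
  then have "((\<lambda>x. sin (fst x) * sin (snd x) / sin (fst x + snd x)) has_derivative
      (\<lambda>h. snd (apex_deriv (a, b) h))) (at (a, b) within X)"
    unfolding sin_a sin_b
    by (rule has_derivative_eq_rhs) (auto simp: apex_deriv_def field_simps power2_eq_square)
  ultimately show ?thesis
    unfolding x apex_def[abs_def] by (rule has_derivative_Pair[THEN has_derivative_eq_rhs]) simp
qed

definition apex_jacobian :: "real \<times> real \<Rightarrow> real" where
  "apex_jacobian x = sin (fst x) * sin (snd x) / (sin (fst x + snd x))^3"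

lemma abs_det2_apex_deriv:
  assumes "x \<in> triangle_angles"
  shows "\<bar>det2 (apex_deriv x)\<bar> = apex_jacobian x"
proof -
  obtain a b where x: "x = (a, b)"
    by (cases x)
  from sin_pos_if_triangle_angles[OF assms] x have "sin a > 0" "sin b > 0" "sin (a + b) > 0"
    by simp_all
  have "det2 (apex_deriv x) = sin a * sin b * (sin a * cos b + cos a * sin b) / ((sin (a + b))^2)^2"
    unfolding x det2_def apex_deriv_def using \<open>sin (a + b) > 0\<close> by (simp add: field_simps power2_eq_square)
  also have "\<dots> = sin a * sin b * sin (a + b) / ((sin (a + b))^2)^2"
    by (simp add: sin_add)
  also have "\<dots> = apex_jacobian x"
    unfolding x apex_jacobian_def using \<open>sin (a + b) > 0\<close> by (simp add: field_simps power2_eq_square power3_eq_cube)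
  finally show ?thesis
    using \<open>sin a > 0\<close> \<open>sin b > 0\<close> \<open>sin (a + b) > 0\<close> by (simp add: x apex_jacobian_def)
qed

lemma anchored_density_eq_apex_jacobian:
  assumes "x \<in> triangle_angles"
  shows "anchored_density x = 2 * apex_jacobian x * nearest_point_density (apex x)"
proof -
  obtain a b where x: "x = (a, b)"
    by (cases x)
  with assms have "0 < a" "0 < b" "a + b < pi" "sin (a + b) > 0"
    using sin_pos_if_triangle_angles[OF assms] by (simp_all add: triangle_angles_def)
  then have "- pi * ((sin (a - b) / (2 * sin (a + b)))^2 + (sin a * sin b / sin (a + b))^2)
      = - (pi / 4) * ((sin (a - b))\<^sup>2 + 4 * (sin a)\<^sup>2 * (sin b)\<^sup>2) / (sin (a + b))\<^sup>2"
    by (simp add: field_simps power2_eq_square)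
  with \<open>0 < a\<close> \<open>0 < b\<close> \<open>a + b < pi\<close> show ?thesis
    by (simp add: x anchored_density_def apex_jacobian_def nearest_point_density_Pair apex_def algebra_simps)
qed

lemma anchored_density_eq_0: "x \<notin> triangle_angles \<Longrightarrow> anchored_density x = 0"
  by (auto simp: anchored_density_def triangle_angles_def split: prod.splits)

text \<open>The argument of \<^const>\<open>arccos\<close> in \<^const>\<open>vertex_angle\<close> lies in \<open>[-1, 1]\<close> by Cauchy-Schwarz,
  so clamping it does not change the angle but makes the function visibly continuous.\<close>

lemma vertex_angle_clamp:
  "vertex_angle P Q R = arccos (max (-1) (min 1 (((Q - P) \<bullet> (R - P)) / (norm (Q - P) * norm (R - P)))))"
proof -
  define q where "q = ((Q - P) \<bullet> (R - P)) / (norm (Q - P) * norm (R - P))"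
  have "\<bar>q\<bar> \<le> 1"
  proof (cases "norm (Q - P) * norm (R - P) = 0")
    case False
    then have "norm (Q - P) * norm (R - P) > 0"
      by (simp add: less_le)
    then show ?thesis
      unfolding q_def by (simp add: abs_divide divide_le_eq_1_pos Cauchy_Schwarz_ineq2)
  qed (simp only: q_def div_by_0 abs_zero zero_le_one)
  then have "max (-1) (min 1 q) = q"
    by (simp add: abs_le_iff max_def min_def)
  then show ?thesis
    unfolding vertex_angle_def q_def[symmetric] by simp
qed

lemma borel_measurable_vertex_angle [measurable]: "vertex_angle P Q \<in> borel_measurable borel"
proof -
  have "continuous_on UNIV (\<lambda>t::real. arccos (max (-1) (min 1 t)))"
    by (intro continuous_on_arccos continuous_intros) auto
  then have "(\<lambda>t::real. arccos (max (-1) (min 1 t))) \<in> borel_measurable borel"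
    by (rule borel_measurable_continuous_onI)
  then have "(\<lambda>R. arccos (max (-1) (min 1 (((Q - P) \<bullet> (R - P)) / (norm (Q - P) * norm (R - P))))))
      \<in> borel_measurable borel"
    by (rule measurable_compose[rotated]) measurable
  then show ?thesis
    unfolding vertex_angle_clamp[abs_def] .
qed

lemma borel_measurable_fst_real_pair [measurable]: "(fst :: real \<times> real \<Rightarrow> real) \<in> borel_measurable borel"
  and borel_measurable_snd_real_pair [measurable]: "(snd :: real \<times> real \<Rightarrow> real) \<in> borel_measurable borel"
  by (intro borel_measurable_continuous_onI continuous_intros)+

lemma borel_measurable_base_angles [measurable]: "base_angles \<in> borel_measurable borel"
  unfolding base_angles_def by measurable

lemma borel_measurable_anchored_density [measurable]: "anchored_density \<in> borel_measurable borel"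
  unfolding anchored_density_def case_prod_beta by measurable

section \<open>Distribution of the base angles\<close>

lemma triangle_angles_borel [measurable]: "triangle_angles \<in> sets borel"
  unfolding triangle_angles_def by measurable

lemma nn_integral_upper_half:
  assumes [measurable]: "T \<in> sets borel"
  shows "(\<integral>\<^sup>+c. ennreal (nearest_point_density c) * indicator (base_angles -` T \<inter> {c. snd c > 0}) c \<partial>lborel)
       = (\<integral>\<^sup>+x. ennreal (apex_jacobian x * nearest_point_density (apex x))
            * indicator (T \<inter> triangle_angles) x \<partial>lborel)"
proof -
  have "(\<integral>\<^sup>+c. ennreal (nearest_point_density c) * indicator (apex ` (T \<inter> triangle_angles)) c \<partial>lborel)
      = (\<integral>\<^sup>+x. ennreal (\<bar>det2 (apex_deriv x)\<bar> * nearest_point_density (apex x))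
           * indicator (T \<inter> triangle_angles) x \<partial>lborel)"
  proof (rule nn_integral_change_of_variables_pair)
    show "(\<integral>\<^sup>+c. ennreal (nearest_point_density c) * indicator (apex ` (T \<inter> triangle_angles)) c \<partial>lborel) < \<infinity>"
      by (rule nn_integral_nearest_point_density_indicator_finite)
    show "apex ` (T \<inter> triangle_angles) \<in> sets borel"
      unfolding apex_image by measurable
    show "(apex has_derivative apex_deriv x) (at x within T \<inter> triangle_angles)" if "x \<in> T \<inter> triangle_angles" for x
      using that sin_pos_if_triangle_angles(3)[of x] by (intro has_derivative_apex) auto
    show "inj_on apex (T \<inter> triangle_angles)"
      by (rule inj_on_inverseI[where g = base_angles]) (use base_angles_apex in blast)
    show "(\<lambda>x. ennreal (\<bar>det2 (apex_deriv x)\<bar> * nearest_point_density (apex x))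
        * indicator (T \<inter> triangle_angles) x)
        \<in> borel_measurable borel"
      unfolding det2_def apex_deriv_def apex_def by measurable
  qed (simp_all add: nearest_point_density_nonneg)
  also have "\<dots> = (\<integral>\<^sup>+x. ennreal (apex_jacobian x * nearest_point_density (apex x))
      * indicator (T \<inter> triangle_angles) x \<partial>lborel)"
    by (intro nn_integral_cong) (simp add: abs_det2_apex_deriv indicator_def)
  finally show ?thesis
    unfolding apex_image .
qed

lemma nn_integral_lower_half:
  assumes [measurable]: "T \<in> sets borel"
  shows "(\<integral>\<^sup>+c. ennreal (nearest_point_density c) * indicator (base_angles -` T \<inter> {c. snd c < 0}) c \<partial>lborel)
       = (\<integral>\<^sup>+c. ennreal (nearest_point_density c) * indicator (base_angles -` T \<inter> {c. snd c > 0}) c \<partial>lborel)"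
proof -
  define reflect :: "real \<times> real \<Rightarrow> real \<times> real" where "reflect c = (fst c, - snd c)" for c
  define U where "U = base_angles -` T \<inter> {c. snd c > 0}"
  have [simp]: "fst (reflect c) = fst c" "snd (reflect c) = - snd c" "reflect (reflect c) = c"
    "base_angles (reflect c) = base_angles c"
    "nearest_point_density (reflect c) = nearest_point_density c" for c
    unfolding reflect_def by (cases c; simp add: base_angles_reflect nearest_point_density_Pair)+
  have "reflect ` U = base_angles -` T \<inter> {c. snd c < 0}"
  proof
    show "reflect ` U \<subseteq> base_angles -` T \<inter> {c. snd c < 0}"
      unfolding U_def by auto
    show "base_angles -` T \<inter> {c. snd c < 0} \<subseteq> reflect ` U"
    proof
      fix c assume "c \<in> base_angles -` T \<inter> {c. snd c < 0}"
      then have "reflect c \<in> U" "c = reflect (reflect c)"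
        unfolding U_def by auto
      then show "c \<in> reflect ` U"
        by blast
    qed
  qed
  moreover have "(\<integral>\<^sup>+c. ennreal (nearest_point_density c) * indicator (reflect ` U) c \<partial>lborel)
      = (\<integral>\<^sup>+c. ennreal (\<bar>det2 reflect\<bar> * nearest_point_density (reflect c)) * indicator U c \<partial>lborel)"
  proof (rule nn_integral_change_of_variables_pair)
    show "U \<in> sets borel"
      unfolding U_def by measurable
    show "(\<integral>\<^sup>+c. ennreal (nearest_point_density c) * indicator (reflect ` U) c \<partial>lborel) < \<infinity>"
      by (rule nn_integral_nearest_point_density_indicator_finite)
    show "reflect ` U \<in> sets borel"
      unfolding \<open>reflect ` U = base_angles -` T \<inter> {c. snd c < 0}\<close> by measurable
    show "(reflect has_derivative reflect) (at x within U)" for x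
      unfolding reflect_def[abs_def] by (auto intro!: derivative_eq_intros)
    show "inj_on reflect U"
      by (rule inj_on_inverseI[where g = reflect]) simp
    show "(\<lambda>x. ennreal (\<bar>det2 reflect\<bar> * nearest_point_density (reflect x)) * indicator U x)
        \<in> borel_measurable borel"
      unfolding U_def reflect_def by measurable
  qed (simp_all add: nearest_point_density_nonneg)
  moreover have "\<bar>det2 reflect\<bar> = 1"
    by (simp add: det2_def reflect_def)
  ultimately show ?thesis
    by (simp add: U_def)
qed

lemma null_sets_snd_eq_0: "{c :: real \<times> real. snd c = 0} \<in> null_sets lborel"
proof -
  have "emeasure (lborel \<Otimes>\<^sub>M lborel) ((UNIV :: real set) \<times> {0}) = 0"
    by (subst lborel.emeasure_pair_measure_Times) auto
  moreover have "{c :: real \<times> real. snd c = 0} = UNIV \<times> {0}"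
    by auto
  ultimately show ?thesis
    by (simp add: null_sets_def lborel_prod borel_prod[symmetric])
qed

lemma nn_integral_base_angles_vimage:
  assumes [measurable]: "T \<in> sets borel"
  shows "(\<integral>\<^sup>+c. ennreal (nearest_point_density c) * indicator (base_angles -` T) c \<partial>lborel)
       = (\<integral>\<^sup>+x. ennreal (anchored_density x) * indicator T x \<partial>lborel)"
proof -
  let ?f = "\<lambda>H c. ennreal (nearest_point_density c) * indicator (base_angles -` T \<inter> H) c"
  from AE_not_in[OF null_sets_snd_eq_0] have "AE c in lborel. snd (c :: real \<times> real) \<noteq> 0"
    by simp
  then have "(\<integral>\<^sup>+c. ennreal (nearest_point_density c) * indicator (base_angles -` T) c \<partial>lborel)
      = (\<integral>\<^sup>+c. ?f {c. snd c > 0} c + ?f {c. snd c < 0} c \<partial>lborel)"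
    by (intro nn_integral_cong_AE) (auto simp: indicator_def)
  also have "\<dots> = 2 * (\<integral>\<^sup>+x. ennreal (apex_jacobian x * nearest_point_density (apex x))
      * indicator (T \<inter> triangle_angles) x \<partial>lborel)"
    by (simp add: nn_integral_add nn_integral_lower_half nn_integral_upper_half mult_2)
  also have "\<dots> = (\<integral>\<^sup>+x. 2 * (ennreal (apex_jacobian x * nearest_point_density (apex x))
      * indicator (T \<inter> triangle_angles) x) \<partial>lborel)"
    by (rule nn_integral_cmult[symmetric]) (unfold apex_jacobian_def apex_def, measurable)
  also have "\<dots> = (\<integral>\<^sup>+x. ennreal (anchored_density x) * indicator T x \<partial>lborel)"
  proof (rule nn_integral_cong)
    fix x :: "real \<times> real"
    show "2 * (ennreal (apex_jacobian x * nearest_point_density (apex x)) * indicator (T \<inter> triangle_angles) x)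
        = ennreal (anchored_density x) * indicator T x"
    proof (cases "x \<in> triangle_angles")
      case True
      then have "apex_jacobian x \<ge> 0"
        using abs_det2_apex_deriv by fastforce
      with True show ?thesis
        by (simp add: anchored_density_eq_apex_jacobian nearest_point_density_nonneg indicator_def
            ennreal_mult' mult.assoc)
    qed (simp add: anchored_density_eq_0)
  qed
  finally show ?thesis .
qed

theorem distr_base_angles:
  "distr (density lborel nearest_point_density) lborel base_angles = density lborel anchored_density"
proof (rule measure_eqI)
  fix T assume "T \<in> sets (distr (density lborel nearest_point_density) lborel base_angles)"
  then have [measurable]: "T \<in> sets borel"
    by simp
  have "base_angles -` T \<in> sets borel"
    using measurable_sets[OF borel_measurable_base_angles \<open>T \<in> sets borel\<close>] by simp
  then show "emeasure (distr (density lborel nearest_point_density) lborel base_angles) T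
      = emeasure (density lborel anchored_density) T"
    by (simp add: emeasure_distr emeasure_density nn_integral_base_angles_vimage)
qed simp

theorem mainTheorem15:
  fixes M :: "'w measure" and PP :: "'w \<Rightarrow> (real \<times> real) set"
  assumes "unit_poisson_pp M PP"
  shows "distributed M lborel
           (\<lambda>w. (vertex_angle ptB ptA (nearest_point PP w),
                 vertex_angle ptA ptB (nearest_point PP w)))
           (\<lambda>z. ennreal (anchored_density z))"
proof -
  interpret unit_poisson_process M PP
    by unfold_locales (rule assms)
  have angles: "(\<lambda>w. (vertex_angle ptB ptA (nearest_point PP w), vertex_angle ptA ptB (nearest_point PP w)))
      = base_angles \<circ> nearest_point PP"
    by (simp add: base_angles_def comp_def)
  have measurable: "base_angles \<circ> nearest_point PP \<in> measurable M lborel"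
    using measurable_nearest_point by measurable
  have "distr M lborel (base_angles \<circ> nearest_point PP)
      = distr (distr M lborel (nearest_point PP)) lborel base_angles"
    using measurable_nearest_point by (intro distr_distr[symmetric]) simp_all
  also have "\<dots> = density lborel anchored_density"
    by (simp add: distr_nearest_point distr_base_angles)
  finally show ?thesis
    unfolding angles distributed_def using measurable by simp
qed

end
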